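(* Let $p\in\{1,2\}$ and assume the measures $\mu^1,\dots,\mu^N$ are not all equal. Let $\pi^{ij}$ ($1\le i,j\le N$) be the plans of the pairwise algorithm, let $m^i_k\in\mathbb{R}^d$ ($i=1,\dots,N$, $k=1,\dots,n_i$) be arbitrary points, and let $\tilde\nu\coloneqq\sum_{i=1}^N\lambda_i\sum_{k=1}^{n_i}\mu^i_k\delta(m^i_k)$. Then for any optimal barycenter $\hat\nu$ (minimizer of $\Psi_p$), $$\frac{\Psi_p(\tilde\nu)}{\Psi_p(\hat\nu)}\le\frac{\sum_{i=1}^N\lambda_i\sum_{j=1}^N\lambda_j\sum_{k=1}^{n_i}\sum_{l=1}^{n_j}\pi^{ij}_{k,l}\|m^i_k-x^j_l\|^p}{\sum_{1\le i<j\le N}\lambda_i\lambda_j\mathcal{W}_p^p(\mu^i,\mu^j)}.$$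
   Context: $\|\cdot\|$ is the Euclidean norm on $\mathbb{R}^d$. For finitely supported probability measures $\mu,\nu$ on $\mathbb{R}^d$, $\mathcal{W}_p^p(\mu,\nu)\coloneqq\min_{\pi\in\Pi(\mu,\nu)}\int\|x-y\|^p\,d\pi$, with $\Pi(\mu,\nu)$ the set of couplings. Fix $N\ge2$, $\lambda\in\Delta_N\coloneqq\{\lambda\in(0,1)^N:\sum_i\lambda_i=1\}$, and discrete probability measures $\mu^i=\sum_{l=1}^{n_i}\mu^i_l\delta(x^i_l)$, $i=1,\dots,N$, with positive weights and pairwise distinct points for each $i$. $\Psi_p(\nu)\coloneqq\sum_{i=1}^N\lambda_i\mathcal{W}_p^p(\nu,\mu^i)$. Plans of the pairwise algorithm: $\pi^{ii}\coloneqq\sum_k\mu^i_k\delta(x^i_k,x^i_k)$ (so $\pi^{ii}_{k,l}=\mu^i_k$ if $l=k$, else $0$); for $i<j$, $\pi^{ij}=\sum_{k,l}\pi^{ij}_{k,l}\delta(x^i_k,x^j_l)\in\Pi(\mu^i,\mu^j)$ is an optimal plan for cost $\|x-y\|^p$; and $\pi^{ji}_{l,k}\coloneqq\pi^{ij}_{k,l}$. *)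

theory Defs
  imports "HOL-Analysis.Analysis"
begin

text \<open>Finitely supported (probability) measures on a Euclidean space are represented
by their mass functions.\<close>

definition supp :: "('b \<Rightarrow> real) \<Rightarrow> 'b set" where
  "supp f = {z. f z \<noteq> 0}"

definition fsprob :: "('a \<Rightarrow> real) \<Rightarrow> bool" where
  "fsprob \<nu> \<longleftrightarrow> finite (supp \<nu>) \<and> (\<forall>y. 0 \<le> \<nu> y) \<and> sum \<nu> (supp \<nu>) = 1"

definition is_coupling :: "('a \<Rightarrow> real) \<Rightarrow> ('a \<Rightarrow> real) \<Rightarrow> ('a \<times> 'a \<Rightarrow> real) \<Rightarrow> bool" where
  "is_coupling \<mu> \<nu> \<gamma> \<longleftrightarrow> finite (supp \<gamma>) \<and> (\<forall>z. 0 \<le> \<gamma> z)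
     \<and> (\<forall>x. (\<Sum>z\<in>{z\<in>supp \<gamma>. fst z = x}. \<gamma> z) = \<mu> x)
     \<and> (\<forall>y. (\<Sum>z\<in>{z\<in>supp \<gamma>. snd z = y}. \<gamma> z) = \<nu> y)"

definition transport_cost :: "nat \<Rightarrow> ('a::real_normed_vector \<times> 'a \<Rightarrow> real) \<Rightarrow> real" where
  "transport_cost p \<gamma> = (\<Sum>z\<in>supp \<gamma>. \<gamma> z * norm (fst z - snd z) ^ p)"

definition Wpp :: "nat \<Rightarrow> ('a::real_normed_vector \<Rightarrow> real) \<Rightarrow> ('a \<Rightarrow> real) \<Rightarrow> real" where
  "Wpp p \<mu> \<nu> = Inf {transport_cost p \<gamma> | \<gamma>. is_coupling \<mu> \<nu> \<gamma>}"

definition dmeas :: "nat \<Rightarrow> (nat \<Rightarrow> real) \<Rightarrow> (nat \<Rightarrow> 'a) \<Rightarrow> 'a \<Rightarrow> real" where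
  "dmeas n w x = (\<lambda>y. \<Sum>k\<in>{1..n}. if x k = y then w k else 0)"

definition Psi :: "nat \<Rightarrow> nat \<Rightarrow> (nat \<Rightarrow> real) \<Rightarrow> (nat \<Rightarrow> 'a::real_normed_vector \<Rightarrow> real)
    \<Rightarrow> ('a \<Rightarrow> real) \<Rightarrow> real" where
  "Psi p N lam mu \<nu> = (\<Sum>i\<in>{1..N}. lam i * Wpp p \<nu> (mu i))"

end

theory Submission
  imports Defs
begin

text \<open>Upper bound: for each j, the plans pi^{ij} weighted by lambda_i, with their first
coordinates moved from x^i_k to m^i_k, form a coupling of the mixture nu-tilde with mu^j whose cost
is the j-th inner sum of the numerator.

Lower bound: for any nu and couplings gamma_i of nu with mu^i, gluing gamma_i and gamma_j along
nu couples mu^i with mu^j. For p = 1 the triangle inequality, and for p = 2 the law of cosines,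
bound the cost of the glued coupling by the costs of gamma_i and gamma_j minus a cross term;
averaged with the weights lambda_i lambda_j the cross terms add up to a sum of squares, which
can be dropped. Hence sum_{i<j} lambda_i lambda_j W_p^p(mu^i, mu^j) <= Psi_p(nu) for every nu,
in particular for the optimal barycenter, and the left side is positive because two of the
mu^i differ.\<close>

text \<open>The push-forward of the weights \<open>g\<close> along \<open>f\<close>; \<open>dmeas n w x\<close> is the case \<open>I = {1..n}\<close>.\<close>
definition pushmass :: "'i set \<Rightarrow> ('i \<Rightarrow> real) \<Rightarrow> ('i \<Rightarrow> 'b) \<Rightarrow> 'b \<Rightarrow> real" where
  "pushmass I g f z = (\<Sum>t\<in>I. if f t = z then g t else 0)"

lemma supp_pushmass_subset: "supp (pushmass I g f) \<subseteq> f ` I"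
proof
  fix z assume "z \<in> supp (pushmass I g f)"
  hence "(\<Sum>t\<in>I. if f t = z then g t else 0) \<noteq> 0" by (simp add: supp_def pushmass_def)
  then obtain t where "t \<in> I" "(if f t = z then g t else 0) \<noteq> 0"
    using sum.not_neutral_contains_not_neutral by blast
  thus "z \<in> f ` I" by (auto split: if_splits)
qed

lemma finite_supp_pushmass: "finite I \<Longrightarrow> finite (supp (pushmass I g f))"
  by (rule finite_subset[OF supp_pushmass_subset]) simp

lemma sum_supp_pushmass:
  assumes "finite I"
  shows "(\<Sum>z\<in>supp (pushmass I g f). pushmass I g f z * h z) = (\<Sum>t\<in>I. g t * h (f t))"
proof -
  have "(\<Sum>z\<in>supp (pushmass I g f). pushmass I g f z * h z) = (\<Sum>z\<in>f ` I. pushmass I g f z * h z)"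
    using assms supp_pushmass_subset[of I g f] by (intro sum.mono_neutral_left) (auto simp: supp_def)
  also have "\<dots> = (\<Sum>z\<in>f ` I. \<Sum>t\<in>I. if f t = z then g t * h z else 0)"
    unfolding pushmass_def sum_distrib_right by (intro sum.cong) auto
  also have "\<dots> = (\<Sum>t\<in>I. \<Sum>z\<in>f ` I. if f t = z then g t * h z else 0)"
    by (rule sum.swap)
  also have "\<dots> = (\<Sum>t\<in>I. g t * h (f t))"
    using assms by (intro sum.cong refl) (subst sum.delta', auto)
  finally show ?thesis .
qed

lemma is_coupling_pushmass:
  assumes "finite I" and "\<And>t. t \<in> I \<Longrightarrow> 0 \<le> g t"
  shows "is_coupling (pushmass I g f) (pushmass I g f') (pushmass I g (\<lambda>t. (f t, f' t)))"
proof -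
  let ?\<gamma> = "pushmass I g (\<lambda>t. (f t, f' t))"
  have fin: "finite (supp ?\<gamma>)" using assms(1) by (rule finite_supp_pushmass)
  have marginal: "(\<Sum>z\<in>{z\<in>supp ?\<gamma>. P z}. ?\<gamma> z) = (\<Sum>t\<in>I. if P (f t, f' t) then g t else 0)" for P
  proof -
    have "(\<Sum>z\<in>{z\<in>supp ?\<gamma>. P z}. ?\<gamma> z) = (\<Sum>z\<in>supp ?\<gamma>. ?\<gamma> z * (if P z then 1 else 0))"
      unfolding sum.inter_filter[OF fin] by (intro sum.cong) auto
    also have "\<dots> = (\<Sum>t\<in>I. if P (f t, f' t) then g t else 0)"
      unfolding sum_supp_pushmass[OF assms(1)] by (intro sum.cong) auto
    finally show ?thesis .
  qed
  have "0 \<le> ?\<gamma> z" for z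
    unfolding pushmass_def using assms(2) by (intro sum_nonneg) auto
  moreover have "(\<Sum>z\<in>{z\<in>supp ?\<gamma>. fst z = a}. ?\<gamma> z) = pushmass I g f a" for a
    unfolding marginal by (simp add: pushmass_def)
  moreover have "(\<Sum>z\<in>{z\<in>supp ?\<gamma>. snd z = b}. ?\<gamma> z) = pushmass I g f' b" for b
    unfolding marginal by (simp add: pushmass_def)
  ultimately show ?thesis
    unfolding is_coupling_def using fin by blast
qed

lemma transport_cost_pushmass:
  "finite I \<Longrightarrow> transport_cost p (pushmass I g (\<lambda>t. (f t, f' t)))
     = (\<Sum>t\<in>I. g t * norm (f t - f' t) ^ p)"
  unfolding transport_cost_def by (simp add: sum_supp_pushmass)

lemma is_coupling_nonneg: "is_coupling \<mu> \<nu> \<gamma> \<Longrightarrow> 0 \<le> \<gamma> z"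
  unfolding is_coupling_def by blast

lemma transport_cost_nonneg: "is_coupling \<mu> \<nu> \<gamma> \<Longrightarrow> 0 \<le> transport_cost p \<gamma>"
  unfolding transport_cost_def using is_coupling_nonneg by (intro sum_nonneg mult_nonneg_nonneg) auto

lemma Wpp_le_transport_cost: "is_coupling \<mu> \<nu> \<gamma> \<Longrightarrow> Wpp p \<mu> \<nu> \<le> transport_cost p \<gamma>"
  unfolding Wpp_def
  by (rule cInf_lower) (auto simp: bdd_below_def intro!: exI[of _ 0] transport_cost_nonneg)

lemma Wpp_pushmass_le:
  fixes f f' :: "'i \<Rightarrow> 'a::real_normed_vector"
  assumes "finite I" and "\<And>t. t \<in> I \<Longrightarrow> 0 \<le> g t"
  shows "Wpp p (pushmass I g f) (pushmass I g f') \<le> (\<Sum>t\<in>I. g t * norm (f t - f' t) ^ p)"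
  using Wpp_le_transport_cost[OF is_coupling_pushmass[OF assms]]
  by (simp add: transport_cost_pushmass[OF assms(1)])

lemma sum_Sigma_times:
  assumes "finite A" and "\<And>a. a \<in> A \<Longrightarrow> finite (B a) \<and> finite (C a)"
  shows "(\<Sum>t\<in>(SIGMA a:A. B a \<times> C a). F t) = (\<Sum>a\<in>A. \<Sum>b\<in>B a. \<Sum>c\<in>C a. F (a, b, c))"
proof -
  have "(\<Sum>a\<in>A. \<Sum>b\<in>B a. \<Sum>c\<in>C a. F (a, b, c)) = (\<Sum>a\<in>A. \<Sum>u\<in>B a \<times> C a. F (a, u))"
    by (intro sum.cong refl) (simp add: sum.cartesian_product split_def)
  also have "\<dots> = (\<Sum>t\<in>(SIGMA a:A. B a \<times> C a). F t)"
    using assms by (subst sum.Sigma) (auto simp: split_def)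
  finally show ?thesis by simp
qed

definition fiber :: "('a \<times> 'b \<Rightarrow> real) \<Rightarrow> 'a \<Rightarrow> ('a \<times> 'b) set" where
  "fiber \<gamma> y = {z \<in> supp \<gamma>. fst z = y}"

lemma finite_fiber: "is_coupling \<nu> \<mu> \<gamma> \<Longrightarrow> finite (fiber \<gamma> y)"
  by (simp add: is_coupling_def fiber_def)

lemma is_coupling_sum_fiber: "is_coupling \<nu> \<mu> \<gamma> \<Longrightarrow> (\<Sum>z\<in>fiber \<gamma> y. \<gamma> z) = \<nu> y"
  by (simp add: is_coupling_def fiber_def)

lemma is_coupling_snd_marginal:
  "is_coupling \<nu> \<mu> \<gamma> \<Longrightarrow> (\<Sum>z\<in>supp \<gamma>. if snd z = b then \<gamma> z else 0) = \<mu> b"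
  by (simp add: is_coupling_def sum.inter_filter[symmetric])

lemma is_coupling_fst_in_supp:
  assumes c: "is_coupling \<nu> \<mu> \<gamma>" and z: "z \<in> supp \<gamma>"
  shows "fst z \<in> supp \<nu>"
proof -
  have "0 < \<gamma> z" using z is_coupling_nonneg[OF c, of z] by (simp add: supp_def)
  also have "\<gamma> z \<le> (\<Sum>z'\<in>fiber \<gamma> (fst z). \<gamma> z')"
    using z finite_fiber[OF c] is_coupling_nonneg[OF c] by (intro member_le_sum) (auto simp: fiber_def)
  finally show ?thesis using is_coupling_sum_fiber[OF c] by (simp add: supp_def)
qed

lemma sum_supp_coupling_fibers:
  assumes "is_coupling \<nu> \<mu> \<gamma>" and "finite (supp \<nu>)"
  shows "(\<Sum>z\<in>supp \<gamma>. h z) = (\<Sum>y\<in>supp \<nu>. \<Sum>z\<in>fiber \<gamma> y. h z)"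
proof -
  have "finite (supp \<gamma>)" using assms(1) by (simp add: is_coupling_def)
  moreover have "fst ` supp \<gamma> \<subseteq> supp \<nu>" using is_coupling_fst_in_supp[OF assms(1)] by blast
  ultimately show ?thesis using assms(2) by (simp add: sum.group fiber_def)
qed

text \<open>The cost of the coupling of the second marginals of \<open>\<gamma>1\<close> and \<open>\<gamma>2\<close> that makes them
conditionally independent given the common first coordinate \<open>y \<sim> \<nu>\<close>.\<close>
definition glued_cost :: "nat \<Rightarrow> ('a::real_normed_vector \<Rightarrow> real) \<Rightarrow> ('a \<times> 'a \<Rightarrow> real)
    \<Rightarrow> ('a \<times> 'a \<Rightarrow> real) \<Rightarrow> real" where
  "glued_cost p \<nu> \<gamma>1 \<gamma>2 = (\<Sum>y\<in>supp \<nu>. \<Sum>z\<in>fiber \<gamma>1 y. \<Sum>z'\<in>fiber \<gamma>2 y.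
       \<gamma>1 z * \<gamma>2 z' / \<nu> y * norm (snd z - snd z') ^ p)"

lemma pushmass_glued_marginals:
  fixes \<nu> :: "'a \<Rightarrow> real"
  assumes f: "fsprob \<nu>" and c1: "is_coupling \<nu> \<mu>1 \<gamma>1" and c2: "is_coupling \<nu> \<mu>2 \<gamma>2"
  defines "I \<equiv> SIGMA y:supp \<nu>. fiber \<gamma>1 y \<times> fiber \<gamma>2 y"
    and "g \<equiv> \<lambda>(y, z, z'). \<gamma>1 z * \<gamma>2 z' / \<nu> y"
  shows "pushmass I g (\<lambda>(y, z, z'). snd z) = \<mu>1" and "pushmass I g (\<lambda>(y, z, z'). snd z') = \<mu>2"
proof -
  have finY: "finite (supp \<nu>)" using f by (simp add: fsprob_def)
  have \<nu>_nz: "\<nu> y \<noteq> 0" if "y \<in> supp \<nu>" for y using that by (simp add: supp_def)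
  have sum_I: "(\<Sum>t\<in>I. F t) = (\<Sum>y\<in>supp \<nu>. \<Sum>z\<in>fiber \<gamma>1 y. \<Sum>z'\<in>fiber \<gamma>2 y. F (y, z, z'))"
    for F :: "'a \<times> ('a \<times> 'a) \<times> ('a \<times> 'a) \<Rightarrow> real"
    unfolding I_def using finY finite_fiber[OF c1] finite_fiber[OF c2] by (intro sum_Sigma_times) auto
  show "pushmass I g (\<lambda>(y, z, z'). snd z) = \<mu>1"
  proof
    fix a
    have "pushmass I g (\<lambda>(y, z, z'). snd z) a = (\<Sum>y\<in>supp \<nu>. \<Sum>z\<in>fiber \<gamma>1 y.
        (if snd z = a then \<gamma>1 z / \<nu> y else 0) * (\<Sum>z'\<in>fiber \<gamma>2 y. \<gamma>2 z'))"
      unfolding pushmass_def sum_I g_def by (intro sum.cong refl) (auto simp: sum_distrib_left)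
    also have "\<dots> = (\<Sum>y\<in>supp \<nu>. \<Sum>z\<in>fiber \<gamma>1 y. if snd z = a then \<gamma>1 z else 0)"
      using \<nu>_nz by (intro sum.cong refl) (auto simp: is_coupling_sum_fiber[OF c2])
    also have "\<dots> = \<mu>1 a"
      unfolding sum_supp_coupling_fibers[OF c1 finY, symmetric] by (rule is_coupling_snd_marginal[OF c1])
    finally show "pushmass I g (\<lambda>(y, z, z'). snd z) a = \<mu>1 a" .
  qed
  show "pushmass I g (\<lambda>(y, z, z'). snd z') = \<mu>2"
  proof
    fix a
    have "pushmass I g (\<lambda>(y, z, z'). snd z') a = (\<Sum>y\<in>supp \<nu>. \<Sum>z\<in>fiber \<gamma>1 y. \<Sum>z'\<in>fiber \<gamma>2 y.
        if snd z' = a then \<gamma>1 z * \<gamma>2 z' / \<nu> y else 0)"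
      unfolding pushmass_def sum_I g_def by (intro sum.cong refl) auto
    also have "\<dots> = (\<Sum>y\<in>supp \<nu>. \<Sum>z'\<in>fiber \<gamma>2 y. \<Sum>z\<in>fiber \<gamma>1 y.
        if snd z' = a then \<gamma>1 z * \<gamma>2 z' / \<nu> y else 0)"
      by (rule sum.cong[OF refl], rule sum.swap)
    also have "\<dots> = (\<Sum>y\<in>supp \<nu>. \<Sum>z'\<in>fiber \<gamma>2 y.
        (if snd z' = a then \<gamma>2 z' / \<nu> y else 0) * (\<Sum>z\<in>fiber \<gamma>1 y. \<gamma>1 z))"
      by (intro sum.cong refl) (auto simp: sum_distrib_left intro!: sum.cong)
    also have "\<dots> = (\<Sum>y\<in>supp \<nu>. \<Sum>z'\<in>fiber \<gamma>2 y. if snd z' = a then \<gamma>2 z' else 0)"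
      using \<nu>_nz by (intro sum.cong refl) (auto simp: is_coupling_sum_fiber[OF c1])
    also have "\<dots> = \<mu>2 a"
      unfolding sum_supp_coupling_fibers[OF c2 finY, symmetric] by (rule is_coupling_snd_marginal[OF c2])
    finally show "pushmass I g (\<lambda>(y, z, z'). snd z') a = \<mu>2 a" .
  qed
qed

lemma Wpp_le_glued_cost:
  fixes \<nu> :: "'a::real_normed_vector \<Rightarrow> real"
  assumes f: "fsprob \<nu>" and c1: "is_coupling \<nu> \<mu>1 \<gamma>1" and c2: "is_coupling \<nu> \<mu>2 \<gamma>2"
  shows "Wpp p \<mu>1 \<mu>2 \<le> glued_cost p \<nu> \<gamma>1 \<gamma>2"
proof -
  define I where "I = (SIGMA y:supp \<nu>. fiber \<gamma>1 y \<times> fiber \<gamma>2 y)"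
  define g where "g = (\<lambda>(y, z, z'). \<gamma>1 z * \<gamma>2 z' / \<nu> y)"
  have fin: "finite (supp \<nu>)" "\<And>y. finite (fiber \<gamma>1 y)" "\<And>y. finite (fiber \<gamma>2 y)"
    using f finite_fiber[OF c1] finite_fiber[OF c2] by (auto simp: fsprob_def)
  have g_nonneg: "0 \<le> g t" for t
    using f is_coupling_nonneg[OF c1] is_coupling_nonneg[OF c2]
    by (auto simp: g_def fsprob_def split: prod.splits)
  have "Wpp p \<mu>1 \<mu>2 \<le> (\<Sum>t\<in>I. g t * norm ((case t of (y, z, z') \<Rightarrow> snd z) - (case t of (y, z, z') \<Rightarrow> snd z')) ^ p)"
    using Wpp_pushmass_le[where I = I and g = g and f = "\<lambda>(y, z, z'). snd z" and f' = "\<lambda>(y, z, z'). snd z'"]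
      fin g_nonneg pushmass_glued_marginals[OF f c1 c2] unfolding I_def g_def by auto
  also have "\<dots> = glued_cost p \<nu> \<gamma>1 \<gamma>2"
    unfolding I_def glued_cost_def g_def using fin by (subst sum_Sigma_times) auto
  finally show ?thesis .
qed

definition cross_coeff :: "nat \<Rightarrow> real" where
  "cross_coeff p = (if p = 2 then 2 else 0)"

lemma norm_diff_power_le:
  fixes a b y :: "'a::real_inner"
  assumes "p \<in> {1, 2}"
  shows "norm (a - b) ^ p \<le> norm (a - y) ^ p + norm (b - y) ^ p - cross_coeff p * inner (a - y) (b - y)"
proof (cases "p = 1")
  case True
  have "norm (a - b) = norm ((a - y) - (b - y))" by simp
  also have "\<dots> \<le> norm (a - y) + norm (b - y)" by (rule norm_triangle_ineq4)
  finally show ?thesis using True by (simp add: cross_coeff_def)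
next
  case False
  hence "p = 2" using assms by auto
  have "norm ((a - y) - (b - y)) ^ 2 = norm (a - y) ^ 2 + norm (b - y) ^ 2 - 2 * inner (a - y) (b - y)"
    by (simp add: power2_norm_eq_inner inner_diff_left inner_diff_right inner_commute)
  thus ?thesis using \<open>p = 2\<close> by (simp add: cross_coeff_def)
qed

lemma sum_product_weights_expand:
  fixes u v :: "'b \<Rightarrow> 'a::real_inner"
  assumes "(\<Sum>z\<in>A. a z) = q" and "(\<Sum>z'\<in>B. b z') = q" and "q \<noteq> 0"
  shows "(\<Sum>z\<in>A. \<Sum>z'\<in>B. a z * b z' / q * (X z + X' z' - k * inner (u z) (v z')))
       = (\<Sum>z\<in>A. a z * X z) + (\<Sum>z'\<in>B. b z' * X' z')
         - k * inner (\<Sum>z\<in>A. a z *\<^sub>R u z) (\<Sum>z'\<in>B. b z' *\<^sub>R v z') / q"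
proof -
  have first: "(\<Sum>z\<in>A. \<Sum>z'\<in>B. a z * b z' / q * X z) = (\<Sum>z\<in>A. a z * X z)"
  proof -
    have "(\<Sum>z\<in>A. \<Sum>z'\<in>B. a z * b z' / q * X z) = (\<Sum>z\<in>A. (a z * X z / q) * (\<Sum>z'\<in>B. b z'))"
      unfolding sum_distrib_left by (intro sum.cong refl) simp
    thus ?thesis using assms(2,3) by simp
  qed
  have second: "(\<Sum>z\<in>A. \<Sum>z'\<in>B. a z * b z' / q * X' z') = (\<Sum>z'\<in>B. b z' * X' z')"
  proof -
    have "(\<Sum>z\<in>A. \<Sum>z'\<in>B. a z * b z' / q * X' z') = (\<Sum>z'\<in>B. \<Sum>z\<in>A. a z * b z' / q * X' z')"
      by (rule sum.swap)
    also have "\<dots> = (\<Sum>z'\<in>B. (b z' * X' z' / q) * (\<Sum>z\<in>A. a z))"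
      unfolding sum_distrib_left by (intro sum.cong refl) simp
    finally show ?thesis using assms(1,3) by simp
  qed
  have cross: "(\<Sum>z\<in>A. \<Sum>z'\<in>B. a z * b z' / q * (k * inner (u z) (v z')))
      = k * inner (\<Sum>z\<in>A. a z *\<^sub>R u z) (\<Sum>z'\<in>B. b z' *\<^sub>R v z') / q"
    by (simp add: inner_sum_left inner_sum_right sum_distrib_left sum_divide_distrib mult_ac) (rule sum.swap)
  have "(\<Sum>z\<in>A. \<Sum>z'\<in>B. a z * b z' / q * (X z + X' z' - k * inner (u z) (v z')))
     = (\<Sum>z\<in>A. \<Sum>z'\<in>B. a z * b z' / q * X z) + (\<Sum>z\<in>A. \<Sum>z'\<in>B. a z * b z' / q * X' z')
       - (\<Sum>z\<in>A. \<Sum>z'\<in>B. a z * b z' / q * (k * inner (u z) (v z')))"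
    by (simp add: ring_distribs sum.distrib sum_subtractf)
  thus ?thesis unfolding first second cross .
qed

text \<open>\<open>\<nu>(y)\<close> times the displacement of \<open>y\<close> to its barycentric projection under \<open>\<gamma>\<close>.\<close>
definition displacement :: "('a::real_vector \<times> 'a \<Rightarrow> real) \<Rightarrow> 'a \<Rightarrow> 'a" where
  "displacement \<gamma> y = (\<Sum>z\<in>fiber \<gamma> y. \<gamma> z *\<^sub>R (snd z - y))"

lemma glued_cost_le:
  fixes \<nu> :: "'a::real_inner \<Rightarrow> real"
  assumes f: "fsprob \<nu>" and c1: "is_coupling \<nu> \<mu>1 \<gamma>1" and c2: "is_coupling \<nu> \<mu>2 \<gamma>2"
    and p: "p \<in> {1, 2}"
  shows "glued_cost p \<nu> \<gamma>1 \<gamma>2 \<le> transport_cost p \<gamma>1 + transport_cost p \<gamma>2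
           - cross_coeff p * (\<Sum>y\<in>supp \<nu>. inner (displacement \<gamma>1 y) (displacement \<gamma>2 y) / \<nu> y)"
proof -
  define X where "X = (\<lambda>z::'a \<times> 'a. norm (snd z - fst z) ^ p)"
  have finY: "finite (supp \<nu>)" using f by (simp add: fsprob_def)
  have "glued_cost p \<nu> \<gamma>1 \<gamma>2 \<le> (\<Sum>y\<in>supp \<nu>. \<Sum>z\<in>fiber \<gamma>1 y. \<Sum>z'\<in>fiber \<gamma>2 y.
       \<gamma>1 z * \<gamma>2 z' / \<nu> y * (X z + X z' - cross_coeff p * inner (snd z - y) (snd z' - y)))"
    unfolding glued_cost_def
  proof (intro sum_mono mult_left_mono)
    fix y z z' assume "z \<in> fiber \<gamma>1 y" "z' \<in> fiber \<gamma>2 y"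
    hence "fst z = y" "fst z' = y" by (auto simp: fiber_def)
    thus "norm (snd z - snd z') ^ p \<le> X z + X z' - cross_coeff p * inner (snd z - y) (snd z' - y)"
      using norm_diff_power_le[OF p] unfolding X_def by simp
    show "0 \<le> \<gamma>1 z * \<gamma>2 z' / \<nu> y"
      using f is_coupling_nonneg[OF c1] is_coupling_nonneg[OF c2] by (simp add: fsprob_def)
  qed
  also have "\<dots> = (\<Sum>y\<in>supp \<nu>. (\<Sum>z\<in>fiber \<gamma>1 y. \<gamma>1 z * X z) + (\<Sum>z'\<in>fiber \<gamma>2 y. \<gamma>2 z' * X z')
        - cross_coeff p * inner (displacement \<gamma>1 y) (displacement \<gamma>2 y) / \<nu> y)"
    unfolding displacement_def
    by (intro sum.cong refl sum_product_weights_expand is_coupling_sum_fiber[OF c1]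
        is_coupling_sum_fiber[OF c2]) (simp add: supp_def)
  also have "\<dots> = transport_cost p \<gamma>1 + transport_cost p \<gamma>2
           - cross_coeff p * (\<Sum>y\<in>supp \<nu>. inner (displacement \<gamma>1 y) (displacement \<gamma>2 y) / \<nu> y)"
    unfolding transport_cost_def sum_supp_coupling_fibers[OF c1 finY] sum_supp_coupling_fibers[OF c2 finY] X_def
    by (simp add: norm_minus_commute sum.distrib sum_subtractf sum_distrib_left)
  finally show ?thesis .
qed

lemma glued_cost_nonneg:
  assumes "fsprob \<nu>" and "is_coupling \<nu> \<mu>1 \<gamma>1" and "is_coupling \<nu> \<mu>2 \<gamma>2"
  shows "0 \<le> glued_cost p \<nu> \<gamma>1 \<gamma>2"
  unfolding glued_cost_def using assms is_coupling_nonneg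
  by (intro sum_nonneg mult_nonneg_nonneg divide_nonneg_nonneg) (auto simp: fsprob_def)

lemma glued_cost_commute: "glued_cost p \<nu> \<gamma>1 \<gamma>2 = glued_cost p \<nu> \<gamma>2 \<gamma>1"
  unfolding glued_cost_def
  by (rule sum.cong[OF refl], subst sum.swap, simp add: norm_minus_commute mult_ac)

lemma double_sum_upper_pairs_le:
  fixes H :: "'k::linorder \<Rightarrow> 'k \<Rightarrow> real"
  assumes sym: "\<And>i j. i \<in> K \<Longrightarrow> j \<in> K \<Longrightarrow> H i j = H j i"
    and nonneg: "\<And>i j. i \<in> K \<Longrightarrow> j \<in> K \<Longrightarrow> 0 \<le> H i j"
  shows "2 * (\<Sum>i\<in>K. \<Sum>j\<in>K. if i < j then H i j else 0) \<le> (\<Sum>i\<in>K. \<Sum>j\<in>K. H i j)"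
proof -
  have "(\<Sum>i\<in>K. \<Sum>j\<in>K. if j < i then H i j else 0) = (\<Sum>j\<in>K. \<Sum>i\<in>K. if j < i then H j i else 0)"
    using sym by (subst sum.swap) (intro sum.cong refl, auto)
  moreover have "(\<Sum>i\<in>K. \<Sum>j\<in>K. (if i < j then H i j else 0) + (if j < i then H i j else 0))
      \<le> (\<Sum>i\<in>K. \<Sum>j\<in>K. H i j)"
    using nonneg by (intro sum_mono) auto
  ultimately show ?thesis by (simp add: sum.distrib)
qed

lemma double_sum_weighted_inner:
  fixes U :: "'k \<Rightarrow> 'y \<Rightarrow> 'a::real_inner"
  shows "(\<Sum>i\<in>K. \<Sum>j\<in>K. lam i * lam j * (\<Sum>y\<in>Y. inner (U i y) (U j y) / q y))
       = (\<Sum>y\<in>Y. inner (\<Sum>i\<in>K. lam i *\<^sub>R U i y) (\<Sum>i\<in>K. lam i *\<^sub>R U i y) / q y)"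
proof -
  have "(\<Sum>i\<in>K. \<Sum>j\<in>K. lam i * lam j * (\<Sum>y\<in>Y. inner (U i y) (U j y) / q y))
      = (\<Sum>i\<in>K. \<Sum>j\<in>K. \<Sum>y\<in>Y. lam i * lam j * inner (U i y) (U j y) / q y)"
    by (simp add: sum_distrib_left)
  also have "\<dots> = (\<Sum>y\<in>Y. \<Sum>i\<in>K. \<Sum>j\<in>K. lam i * lam j * inner (U i y) (U j y) / q y)"
    by (subst sum.swap, rule sum.cong[OF refl], subst sum.swap, rule refl)
  also have "\<dots> = (\<Sum>y\<in>Y. inner (\<Sum>i\<in>K. lam i *\<^sub>R U i y) (\<Sum>i\<in>K. lam i *\<^sub>R U i y) / q y)"
    unfolding inner_sum_left inner_sum_right sum_divide_distrib
    by (intro sum.cong refl) (simp add: sum_divide_distrib mult_ac inner_commute)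
  finally show ?thesis .
qed

lemma sum_pairs_Wpp_le_coupling_costs:
  fixes \<nu> :: "'a::real_inner \<Rightarrow> real" and \<gamma> :: "'k::linorder \<Rightarrow> 'a \<times> 'a \<Rightarrow> real"
  assumes f: "fsprob \<nu>" and c: "\<And>i. i \<in> K \<Longrightarrow> is_coupling \<nu> (\<mu> i) (\<gamma> i)"
    and p: "p \<in> {1, 2}" and lam_nonneg: "\<And>i. i \<in> K \<Longrightarrow> 0 \<le> lam i" and lam_sum: "(\<Sum>i\<in>K. lam i) = 1"
  shows "(\<Sum>i\<in>K. \<Sum>j\<in>K. if i < j then lam i * lam j * Wpp p (\<mu> i) (\<mu> j) else 0)
         \<le> (\<Sum>i\<in>K. lam i * transport_cost p (\<gamma> i))"
proof -
  define G where "G i j = glued_cost p \<nu> (\<gamma> i) (\<gamma> j)" for i j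
  define C where "C i = transport_cost p (\<gamma> i)" for i
  define D where "D i j = (\<Sum>y\<in>supp \<nu>. inner (displacement (\<gamma> i) y) (displacement (\<gamma> j) y) / \<nu> y)" for i j
  have "(\<Sum>i\<in>K. \<Sum>j\<in>K. if i < j then lam i * lam j * Wpp p (\<mu> i) (\<mu> j) else 0)
      \<le> (\<Sum>i\<in>K. \<Sum>j\<in>K. if i < j then lam i * lam j * G i j else 0)"
    unfolding G_def using Wpp_le_glued_cost[OF f c c] lam_nonneg
    by (intro sum_mono) (auto intro!: mult_left_mono)
  also have "\<dots> \<le> (\<Sum>i\<in>K. \<Sum>j\<in>K. lam i * lam j * G i j) / 2"
  proof -
    have "2 * (\<Sum>i\<in>K. \<Sum>j\<in>K. if i < j then lam i * lam j * G i j else 0)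
        \<le> (\<Sum>i\<in>K. \<Sum>j\<in>K. lam i * lam j * G i j)"
      by (rule double_sum_upper_pairs_le) (auto simp: G_def glued_cost_commute[of p \<nu>]
          intro!: mult_nonneg_nonneg lam_nonneg glued_cost_nonneg[OF f c c])
    thus ?thesis by simp
  qed
  also have "\<dots> \<le> (\<Sum>i\<in>K. \<Sum>j\<in>K. lam i * lam j * (C i + C j - cross_coeff p * D i j)) / 2"
    unfolding G_def C_def D_def using glued_cost_le[OF f c c p] lam_nonneg
    by (intro divide_right_mono sum_mono mult_left_mono) (auto intro!: mult_nonneg_nonneg)
  also have "\<dots> = (2 * (\<Sum>i\<in>K. lam i * C i)
      - cross_coeff p * (\<Sum>y\<in>supp \<nu>. inner (\<Sum>i\<in>K. lam i *\<^sub>R displacement (\<gamma> i) y)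
                                        (\<Sum>i\<in>K. lam i *\<^sub>R displacement (\<gamma> i) y) / \<nu> y)) / 2"
  proof -
    have "(\<Sum>i\<in>K. \<Sum>j\<in>K. lam i * lam j * C i) = (\<Sum>i\<in>K. lam i * C i)"
      "(\<Sum>i\<in>K. \<Sum>j\<in>K. lam i * lam j * C j) = (\<Sum>i\<in>K. lam i * C i)"
      by (simp_all add: sum_distrib_left[symmetric] sum_distrib_right[symmetric] lam_sum mult_ac,
          subst sum.swap, simp add: sum_distrib_left[symmetric] sum_distrib_right[symmetric] lam_sum mult_ac)
    thus ?thesis unfolding D_def double_sum_weighted_inner[symmetric]
      by (simp add: ring_distribs sum.distrib sum_subtractf sum_distrib_left mult_ac)
  qed
  also have "\<dots> \<le> (\<Sum>i\<in>K. lam i * C i)"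
    using f by (auto simp: cross_coeff_def fsprob_def intro!: sum_nonneg divide_nonneg_nonneg)
  finally show ?thesis unfolding C_def .
qed

text \<open>Wpp is an infimum that need not be attained, hence the \<open>\<epsilon>\<close>-argument.\<close>
lemma sum_pairs_Wpp_le_weighted_Wpp:
  fixes \<nu> :: "'a::real_inner \<Rightarrow> real" and K :: "'k::linorder set"
  assumes f: "fsprob \<nu>" and c: "\<And>i. i \<in> K \<Longrightarrow> \<exists>\<gamma>. is_coupling \<nu> (\<mu> i) \<gamma>"
    and p: "p \<in> {1, 2}" and lam_nonneg: "\<And>i. i \<in> K \<Longrightarrow> 0 \<le> lam i" and lam_sum: "(\<Sum>i\<in>K. lam i) = 1"
  shows "(\<Sum>i\<in>K. \<Sum>j\<in>K. if i < j then lam i * lam j * Wpp p (\<mu> i) (\<mu> j) else 0)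
         \<le> (\<Sum>i\<in>K. lam i * Wpp p \<nu> (\<mu> i))"
proof (rule field_le_epsilon)
  fix e :: real assume e: "0 < e"
  have "\<exists>\<gamma>. is_coupling \<nu> (\<mu> i) \<gamma> \<and> transport_cost p \<gamma> < Wpp p \<nu> (\<mu> i) + e" if i: "i \<in> K" for i
  proof -
    have "{transport_cost p \<gamma> | \<gamma>. is_coupling \<nu> (\<mu> i) \<gamma>} \<noteq> {}" using c[OF i] by auto
    from cInf_lessD[OF this, of "Wpp p \<nu> (\<mu> i) + e"] show ?thesis
      using e by (auto simp: Wpp_def)
  qed
  then obtain \<gamma> where \<gamma>: "\<And>i. i \<in> K \<Longrightarrow> is_coupling \<nu> (\<mu> i) (\<gamma> i)"
      "\<And>i. i \<in> K \<Longrightarrow> transport_cost p (\<gamma> i) < Wpp p \<nu> (\<mu> i) + e"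
    by metis
  have "(\<Sum>i\<in>K. \<Sum>j\<in>K. if i < j then lam i * lam j * Wpp p (\<mu> i) (\<mu> j) else 0)
         \<le> (\<Sum>i\<in>K. lam i * transport_cost p (\<gamma> i))"
    by (rule sum_pairs_Wpp_le_coupling_costs[OF f \<gamma>(1) p lam_nonneg lam_sum])
  also have "\<dots> \<le> (\<Sum>i\<in>K. lam i * (Wpp p \<nu> (\<mu> i) + e))"
    using \<gamma>(2) lam_nonneg by (intro sum_mono mult_left_mono) (auto intro: less_imp_le)
  also have "\<dots> = (\<Sum>i\<in>K. lam i * Wpp p \<nu> (\<mu> i)) + e"
    using lam_sum by (simp add: distrib_left sum.distrib sum_distrib_right[symmetric])
  finally show "(\<Sum>i\<in>K. \<Sum>j\<in>K. if i < j then lam i * lam j * Wpp p (\<mu> i) (\<mu> j) else 0)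
         \<le> (\<Sum>i\<in>K. lam i * Wpp p \<nu> (\<mu> i)) + e" .
qed

lemma ex_coupling_dmeas:
  assumes f: "fsprob \<nu>" and w_nonneg: "\<And>k. k \<in> {1..n} \<Longrightarrow> 0 \<le> w k" and w_sum: "(\<Sum>k\<in>{1..n}. w k) = 1"
  shows "\<exists>\<gamma>. is_coupling \<nu> (dmeas n w x) \<gamma>"
proof -
  define I where "I = supp \<nu> \<times> {1..n}"
  define g where "g = (\<lambda>(y, k). \<nu> y * w k)"
  have finI: "finite I" using f by (simp add: fsprob_def I_def)
  have g_nonneg: "0 \<le> g t" if "t \<in> I" for t
    using that f w_nonneg by (auto simp: I_def g_def fsprob_def)
  have sum_I: "(\<Sum>t\<in>I. F t) = (\<Sum>y\<in>supp \<nu>. \<Sum>k\<in>{1..n}. F (y, k))" for F :: "_ \<Rightarrow> real"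
    unfolding I_def by (simp add: sum.cartesian_product)
  have "pushmass I g fst = \<nu>"
  proof
    fix a
    have "pushmass I g fst a = (\<Sum>y\<in>supp \<nu>. if y = a then \<nu> y * (\<Sum>k\<in>{1..n}. w k) else 0)"
      unfolding pushmass_def sum_I g_def by (intro sum.cong refl) (auto simp: sum_distrib_left)
    also have "\<dots> = \<nu> a" using f w_sum by (simp add: sum.delta' fsprob_def supp_def)
    finally show "pushmass I g fst a = \<nu> a" .
  qed
  moreover have "pushmass I g (\<lambda>(y, k). x k) = dmeas n w x"
  proof
    fix a
    have "pushmass I g (\<lambda>(y, k). x k) a = (\<Sum>y\<in>supp \<nu>. \<nu> y * dmeas n w x a)"
      unfolding pushmass_def sum_I g_def dmeas_def sum_distrib_left by (intro sum.cong refl) auto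
    also have "\<dots> = dmeas n w x a" using f by (simp add: fsprob_def sum_distrib_right[symmetric])
    finally show "pushmass I g (\<lambda>(y, k). x k) a = dmeas n w x a" .
  qed
  ultimately show ?thesis
    using is_coupling_pushmass[where I = I and g = g and f = fst and f' = "\<lambda>(y, k). x k", OF finI g_nonneg]
    by auto
qed

definition is_plan :: "nat \<Rightarrow> nat \<Rightarrow> (nat \<Rightarrow> real) \<Rightarrow> (nat \<Rightarrow> real) \<Rightarrow> (nat \<Rightarrow> nat \<Rightarrow> real) \<Rightarrow> bool" where
  "is_plan a b wa wb P \<longleftrightarrow> (\<forall>k\<in>{1..a}. \<forall>l\<in>{1..b}. 0 \<le> P k l)
     \<and> (\<forall>k\<in>{1..a}. (\<Sum>l\<in>{1..b}. P k l) = wa k) \<and> (\<forall>l\<in>{1..b}. (\<Sum>k\<in>{1..a}. P k l) = wb l)"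

lemma is_plan_cong:
  assumes "\<And>k l. k \<in> {1..a} \<Longrightarrow> l \<in> {1..b} \<Longrightarrow> P k l = Q k l"
  shows "is_plan a b wa wb P \<longleftrightarrow> is_plan a b wa wb Q"
proof -
  have "(\<Sum>l\<in>{1..b}. P k l) = (\<Sum>l\<in>{1..b}. Q k l)" if "k \<in> {1..a}" for k
    using that assms by (intro sum.cong) auto
  moreover have "(\<Sum>k\<in>{1..a}. P k l) = (\<Sum>k\<in>{1..a}. Q k l)" if "l \<in> {1..b}" for l
    using that assms by (intro sum.cong) auto
  ultimately show ?thesis unfolding is_plan_def using assms by auto
qed

lemma is_plan_diagonal:
  "(\<And>k. k \<in> {1..a} \<Longrightarrow> 0 \<le> w k) \<Longrightarrow> is_plan a a w w (\<lambda>k l. if l = k then w k else 0)"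
  unfolding is_plan_def by (simp add: if_distrib sum.delta' cong: if_cong)

lemma is_plan_transpose: "is_plan a b wa wb P \<Longrightarrow> is_plan b a wb wa (\<lambda>l k. P k l)"
  unfolding is_plan_def by blast

lemma is_plan_all_pairs:
  fixes K :: "'k::linorder set"
  assumes w_nonneg: "\<And>i k. i \<in> K \<Longrightarrow> k \<in> {1..n i} \<Longrightarrow> 0 \<le> w i k"
    and diag: "\<And>i k l. i \<in> K \<Longrightarrow> k \<in> {1..n i} \<Longrightarrow> l \<in> {1..n i}
                \<Longrightarrow> P i i k l = (if l = k then w i k else 0)"
    and upper: "\<And>i j. i \<in> K \<Longrightarrow> j \<in> K \<Longrightarrow> i < j \<Longrightarrow> is_plan (n i) (n j) (w i) (w j) (P i j)"
    and sym: "\<And>i j k l. i \<in> K \<Longrightarrow> j \<in> K \<Longrightarrow> j < i \<Longrightarrow> k \<in> {1..n i} \<Longrightarrow> l \<in> {1..n j}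
                \<Longrightarrow> P i j k l = P j i l k"
    and i: "i \<in> K" and j: "j \<in> K"
  shows "is_plan (n i) (n j) (w i) (w j) (P i j)"
proof (cases i j rule: linorder_cases)
  case less
  thus ?thesis by (rule upper[OF i j])
next
  case equal
  have "is_plan (n i) (n i) (w i) (w i) (P i i) \<longleftrightarrow> is_plan (n i) (n i) (w i) (w i) (\<lambda>k l. if l = k then w i k else 0)"
    by (rule is_plan_cong) (rule diag[OF i])
  thus ?thesis using is_plan_diagonal[of "n i" "w i"] w_nonneg[OF i] equal by simp
next
  case greater
  have "is_plan (n i) (n j) (w i) (w j) (P i j) \<longleftrightarrow> is_plan (n i) (n j) (w i) (w j) (\<lambda>k l. P j i l k)"
    by (rule is_plan_cong) (rule sym[OF i j greater])
  thus ?thesis using is_plan_transpose[OF upper[OF j i greater]] by simp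
qed

lemma Wpp_mixture_le:
  fixes m :: "'k \<Rightarrow> nat \<Rightarrow> 'a::real_normed_vector" and y :: "nat \<Rightarrow> 'a"
  assumes "finite K" and plans: "\<And>i. i \<in> K \<Longrightarrow> is_plan (n i) b (w i) wb (P i)"
    and lam_nonneg: "\<And>i. i \<in> K \<Longrightarrow> 0 \<le> lam i" and lam_sum: "(\<Sum>i\<in>K. lam i) = 1"
  shows "Wpp p (\<lambda>z. \<Sum>i\<in>K. lam i * dmeas (n i) (w i) (m i) z) (dmeas b wb y)
     \<le> (\<Sum>i\<in>K. lam i * (\<Sum>k\<in>{1..n i}. \<Sum>l\<in>{1..b}. P i k l * norm (m i k - y l) ^ p))"
proof -
  define I where "I = (SIGMA i:K. {1..n i} \<times> {1..b})"
  define g where "g = (\<lambda>(i, k, l). lam i * P i k l)"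
  have finI: "finite I" using assms(1) by (simp add: I_def)
  have sum_I: "(\<Sum>t\<in>I. F t) = (\<Sum>i\<in>K. \<Sum>k\<in>{1..n i}. \<Sum>l\<in>{1..b}. F (i, k, l))" for F :: "_ \<Rightarrow> real"
    unfolding I_def using assms(1) by (intro sum_Sigma_times) auto
  have g_nonneg: "0 \<le> g t" if "t \<in> I" for t
    using that plans lam_nonneg by (auto simp: I_def g_def is_plan_def)
  have "pushmass I g (\<lambda>(i, k, l). m i k) = (\<lambda>z. \<Sum>i\<in>K. lam i * dmeas (n i) (w i) (m i) z)"
  proof
    fix a
    have "pushmass I g (\<lambda>(i, k, l). m i k) a
        = (\<Sum>i\<in>K. lam i * (\<Sum>k\<in>{1..n i}. if m i k = a then (\<Sum>l\<in>{1..b}. P i k l) else 0))"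
      unfolding pushmass_def sum_I g_def sum_distrib_left by (intro sum.cong refl) (auto simp: sum_distrib_left)
    also have "\<dots> = (\<Sum>i\<in>K. lam i * dmeas (n i) (w i) (m i) a)"
      unfolding dmeas_def using plans by (intro sum.cong refl arg_cong2[where f = "(*)"]) (auto simp: is_plan_def)
    finally show "pushmass I g (\<lambda>(i, k, l). m i k) a = (\<Sum>i\<in>K. lam i * dmeas (n i) (w i) (m i) a)" .
  qed
  moreover have "pushmass I g (\<lambda>(i, k, l). y l) = dmeas b wb y"
  proof
    fix a
    have "pushmass I g (\<lambda>(i, k, l). y l) a
        = (\<Sum>i\<in>K. lam i * (\<Sum>l\<in>{1..b}. \<Sum>k\<in>{1..n i}. if y l = a then P i k l else 0))"
      unfolding pushmass_def sum_I g_def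
      by (rule sum.cong[OF refl], subst sum.swap) (auto simp: sum_distrib_left intro!: sum.cong)
    also have "\<dots> = (\<Sum>i\<in>K. lam i * dmeas b wb y a)"
      unfolding dmeas_def using plans
      by (intro sum.cong refl arg_cong2[where f = "(*)"]) (auto simp: is_plan_def sum.If_cases)
    also have "\<dots> = dmeas b wb y a" using lam_sum by (simp add: sum_distrib_right[symmetric])
    finally show "pushmass I g (\<lambda>(i, k, l). y l) a = dmeas b wb y a" .
  qed
  ultimately have "Wpp p (\<lambda>z. \<Sum>i\<in>K. lam i * dmeas (n i) (w i) (m i) z) (dmeas b wb y)
      \<le> (\<Sum>t\<in>I. g t * norm ((case t of (i, k, l) \<Rightarrow> m i k) - (case t of (i, k, l) \<Rightarrow> y l)) ^ p)"
    using Wpp_pushmass_le[where I = I and g = g and f = "\<lambda>(i, k, l). m i k" and f' = "\<lambda>(i, k, l). y l",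
        OF finI g_nonneg]
    by simp
  also have "\<dots> = (\<Sum>i\<in>K. lam i * (\<Sum>k\<in>{1..n i}. \<Sum>l\<in>{1..b}. P i k l * norm (m i k - y l) ^ p))"
    unfolding sum_I g_def by (simp add: sum_distrib_left mult_ac)
  finally show ?thesis .
qed

lemma Psi_mixture_le:
  fixes m x :: "nat \<Rightarrow> nat \<Rightarrow> 'a::real_normed_vector"
  assumes plans: "\<And>i j. i \<in> {1..N} \<Longrightarrow> j \<in> {1..N} \<Longrightarrow> is_plan (n i) (n j) (w i) (w j) (P i j)"
    and lam_nonneg: "\<And>i. i \<in> {1..N} \<Longrightarrow> 0 \<le> lam i" and lam_sum: "(\<Sum>i\<in>{1..N}. lam i) = 1"
  shows "Psi p N lam (\<lambda>i. dmeas (n i) (w i) (x i)) (\<lambda>z. \<Sum>i\<in>{1..N}. lam i * dmeas (n i) (w i) (m i) z)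
     \<le> (\<Sum>i\<in>{1..N}. lam i * (\<Sum>j\<in>{1..N}. lam j *
           (\<Sum>k\<in>{1..n i}. \<Sum>l\<in>{1..n j}. P i j k l * norm (m i k - x j l) ^ p)))"
proof -
  let ?cost = "\<lambda>i j. \<Sum>k\<in>{1..n i}. \<Sum>l\<in>{1..n j}. P i j k l * norm (m i k - x j l) ^ p"
  have "Psi p N lam (\<lambda>i. dmeas (n i) (w i) (x i)) (\<lambda>z. \<Sum>i\<in>{1..N}. lam i * dmeas (n i) (w i) (m i) z)
      \<le> (\<Sum>j\<in>{1..N}. lam j * (\<Sum>i\<in>{1..N}. lam i * ?cost i j))"
    unfolding Psi_def using plans lam_nonneg lam_sum
    by (intro sum_mono mult_left_mono Wpp_mixture_le) auto
  also have "\<dots> = (\<Sum>i\<in>{1..N}. lam i * (\<Sum>j\<in>{1..N}. lam j * ?cost i j))"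
    using sum.swap[of "\<lambda>j i. lam j * (lam i * ?cost i j)" "{1..N}" "{1..N}"]
    by (simp add: sum_distrib_left mult.left_commute)
  finally show ?thesis .
qed

lemma dmeas_eq_of_zero_cost_plan:
  fixes X Y :: "nat \<Rightarrow> 'a::real_normed_vector"
  assumes plan: "is_plan a b wa wb P"
    and zero: "(\<Sum>k\<in>{1..a}. \<Sum>l\<in>{1..b}. P k l * norm (X k - Y l) ^ p) = 0" and "p \<noteq> 0"
  shows "dmeas a wa X = dmeas b wb Y"
proof
  fix c
  have term_nonneg: "0 \<le> P k l * norm (X k - Y l) ^ p" if "k \<in> {1..a}" "l \<in> {1..b}" for k l
    using plan that by (simp add: is_plan_def)
  have row_zero: "(\<Sum>l\<in>{1..b}. P k l * norm (X k - Y l) ^ p) = 0" if "k \<in> {1..a}" for k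
    using zero that term_nonneg by (subst (asm) sum_nonneg_eq_0_iff) (auto intro: sum_nonneg)
  have "P k l * norm (X k - Y l) ^ p = 0" if "k \<in> {1..a}" "l \<in> {1..b}" for k l
    using row_zero[OF that(1)] that term_nonneg by (subst (asm) sum_nonneg_eq_0_iff) auto
  hence transported: "X k = Y l" if "k \<in> {1..a}" "l \<in> {1..b}" "P k l \<noteq> 0" for k l
    using that \<open>p \<noteq> 0\<close> by fastforce
  have "dmeas a wa X c = (\<Sum>k\<in>{1..a}. \<Sum>l\<in>{1..b}. if X k = c then P k l else 0)"
    unfolding dmeas_def using plan by (intro sum.cong refl) (auto simp: is_plan_def)
  also have "\<dots> = (\<Sum>k\<in>{1..a}. \<Sum>l\<in>{1..b}. if Y l = c then P k l else 0)"
    by (intro sum.cong refl) (metis transported)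
  also have "\<dots> = (\<Sum>l\<in>{1..b}. \<Sum>k\<in>{1..a}. if Y l = c then P k l else 0)" by (rule sum.swap)
  also have "\<dots> = dmeas b wb Y c"
    unfolding dmeas_def using plan by (intro sum.cong refl) (auto simp: is_plan_def sum.If_cases)
  finally show "dmeas a wa X c = dmeas b wb Y c" .
qed

lemma sum_pairs_Wpp_pos:
  fixes X :: "'k::linorder \<Rightarrow> nat \<Rightarrow> 'a::real_normed_vector"
  assumes "finite K" and "p \<noteq> 0" and lam_pos: "\<And>i. i \<in> K \<Longrightarrow> 0 < lam i"
    and plans: "\<And>i j. i \<in> K \<Longrightarrow> j \<in> K \<Longrightarrow> is_plan (n i) (n j) (w i) (w j) (P i j)"
    and opt: "\<And>i j. i \<in> K \<Longrightarrow> j \<in> K \<Longrightarrow> i < j \<Longrightarrow>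
         (\<Sum>k\<in>{1..n i}. \<Sum>l\<in>{1..n j}. P i j k l * norm (X i k - X j l) ^ p)
           = Wpp p (dmeas (n i) (w i) (X i)) (dmeas (n j) (w j) (X j))"
    and distinct: "i \<in> K" "j \<in> K" "dmeas (n i) (w i) (X i) \<noteq> dmeas (n j) (w j) (X j)"
  shows "0 < (\<Sum>i\<in>K. \<Sum>j\<in>K. if i < j then lam i * lam j *
               Wpp p (dmeas (n i) (w i) (X i)) (dmeas (n j) (w j) (X j)) else 0)"
proof -
  define W where "W i j = Wpp p (dmeas (n i) (w i) (X i)) (dmeas (n j) (w j) (X j))" for i j
  have W_nonneg: "0 \<le> W i j" if "i \<in> K" "j \<in> K" "i < j" for i j
    unfolding W_def opt[OF that, symmetric] using plans[OF that(1,2)]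
    by (intro sum_nonneg mult_nonneg_nonneg) (auto simp: is_plan_def)
  have W_pos: "0 < W i j" if "i \<in> K" "j \<in> K" "i < j" "dmeas (n i) (w i) (X i) \<noteq> dmeas (n j) (w j) (X j)" for i j
    using W_nonneg[OF that(1-3)] that(4) dmeas_eq_of_zero_cost_plan[OF plans[OF that(1,2)] _ \<open>p \<noteq> 0\<close>]
    unfolding W_def opt[OF that(1-3), symmetric] by fastforce
  obtain a b where ab: "a \<in> K" "b \<in> K" "a < b" "0 < W a b"
    using distinct W_pos W_pos[of j i] by (cases i j rule: linorder_cases) auto
  have term_nonneg: "0 \<le> (if i < j then lam i * lam j * W i j else 0)" if "i \<in> K" "j \<in> K" for i j
    using that by (auto intro!: mult_nonneg_nonneg W_nonneg lam_pos[THEN less_imp_le])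
  have "0 < lam a * lam b * W a b" using ab lam_pos by simp
  hence "0 < (\<Sum>j\<in>K. if a < j then lam a * lam j * W a j else 0)"
    using ab term_nonneg \<open>finite K\<close> by (intro sum_pos2[of K b]) auto
  hence "0 < (\<Sum>i\<in>K. \<Sum>j\<in>K. if i < j then lam i * lam j * W i j else 0)"
    using term_nonneg
    by (intro sum_pos2[where f = "\<lambda>i. \<Sum>j\<in>K. if i < j then lam i * lam j * W i j else 0", OF \<open>finite K\<close> ab(1)])
       (auto intro: sum_nonneg)
  thus ?thesis unfolding W_def .
qed

theorem mainTheorem6:
  fixes p N :: nat
    and lam :: "nat \<Rightarrow> real"
    and n :: "nat \<Rightarrow> nat"
    and w :: "nat \<Rightarrow> nat \<Rightarrow> real"
    and x m :: "nat \<Rightarrow> nat \<Rightarrow> 'a::euclidean_space"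
    and pi :: "nat \<Rightarrow> nat \<Rightarrow> nat \<Rightarrow> nat \<Rightarrow> real"
    and \<nu>hat :: "'a \<Rightarrow> real"
  assumes p: "p \<in> {1, 2}"
    and N: "N \<ge> 2"
    and lam_pos: "\<forall>i\<in>{1..N}. 0 < lam i"
    and lam_sum: "(\<Sum>i\<in>{1..N}. lam i) = 1"
    and w_pos: "\<forall>i\<in>{1..N}. \<forall>k\<in>{1..n i}. 0 < w i k"
    and w_sum: "\<forall>i\<in>{1..N}. (\<Sum>k\<in>{1..n i}. w i k) = 1"
    and x_inj: "\<forall>i\<in>{1..N}. inj_on (x i) {1..n i}"
    and not_all_eq: "\<exists>i\<in>{1..N}. \<exists>j\<in>{1..N}. dmeas (n i) (w i) (x i) \<noteq> dmeas (n j) (w j) (x j)"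
    and pi_diag: "\<forall>i\<in>{1..N}. \<forall>k\<in>{1..n i}. \<forall>l\<in>{1..n i}. pi i i k l = (if l = k then w i k else 0)"
    and pi_nonneg: "\<forall>i\<in>{1..N}. \<forall>j\<in>{1..N}. i < j \<longrightarrow>
         (\<forall>k\<in>{1..n i}. \<forall>l\<in>{1..n j}. 0 \<le> pi i j k l)"
    and pi_marg1: "\<forall>i\<in>{1..N}. \<forall>j\<in>{1..N}. i < j \<longrightarrow>
         (\<forall>k\<in>{1..n i}. (\<Sum>l\<in>{1..n j}. pi i j k l) = w i k)"
    and pi_marg2: "\<forall>i\<in>{1..N}. \<forall>j\<in>{1..N}. i < j \<longrightarrow>
         (\<forall>l\<in>{1..n j}. (\<Sum>k\<in>{1..n i}. pi i j k l) = w j l)"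
    and pi_opt: "\<forall>i\<in>{1..N}. \<forall>j\<in>{1..N}. i < j \<longrightarrow>
         (\<Sum>k\<in>{1..n i}. \<Sum>l\<in>{1..n j}. pi i j k l * norm (x i k - x j l) ^ p)
           = Wpp p (dmeas (n i) (w i) (x i)) (dmeas (n j) (w j) (x j))"
    and pi_sym: "\<forall>i\<in>{1..N}. \<forall>j\<in>{1..N}. j < i \<longrightarrow>
         (\<forall>l\<in>{1..n i}. \<forall>k\<in>{1..n j}. pi i j l k = pi j i k l)"
    and nuhat_prob: "fsprob \<nu>hat"
    and nuhat_opt: "\<forall>\<nu>. fsprob \<nu> \<longrightarrow>
         Psi p N lam (\<lambda>i. dmeas (n i) (w i) (x i)) \<nu>hat \<le> Psi p N lam (\<lambda>i. dmeas (n i) (w i) (x i)) \<nu>"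
  shows "Psi p N lam (\<lambda>i. dmeas (n i) (w i) (x i))
            (\<lambda>y. \<Sum>i\<in>{1..N}. lam i * dmeas (n i) (w i) (m i) y)
          / Psi p N lam (\<lambda>i. dmeas (n i) (w i) (x i)) \<nu>hat
         \<le> (\<Sum>i\<in>{1..N}. lam i * (\<Sum>j\<in>{1..N}. lam j *
               (\<Sum>k\<in>{1..n i}. \<Sum>l\<in>{1..n j}. pi i j k l * norm (m i k - x j l) ^ p)))
          / (\<Sum>i\<in>{1..N}. \<Sum>j\<in>{1..N}. if i < j then lam i * lam j *
               Wpp p (dmeas (n i) (w i) (x i)) (dmeas (n j) (w j) (x j)) else 0)"
proof -
  let ?K = "{1..N}"
  let ?\<mu> = "\<lambda>i. dmeas (n i) (w i) (x i)"
  let ?cost = "\<lambda>i j. \<Sum>k\<in>{1..n i}. \<Sum>l\<in>{1..n j}. pi i j k l * norm (m i k - x j l) ^ p"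
  have lam_nonneg: "\<And>i. i \<in> ?K \<Longrightarrow> 0 \<le> lam i" using lam_pos by (simp add: less_imp_le)
  have "is_plan (n i) (n j) (w i) (w j) (pi i j)" if "i \<in> ?K" "j \<in> ?K" "i < j" for i j
    using pi_nonneg pi_marg1 pi_marg2 that by (simp add: is_plan_def)
  note plan = is_plan_all_pairs[where K = ?K and P = pi, OF less_imp_le[OF w_pos[rule_format]]
      pi_diag[rule_format] this pi_sym[rule_format]]
  have upper: "Psi p N lam ?\<mu> (\<lambda>y. \<Sum>i\<in>?K. lam i * dmeas (n i) (w i) (m i) y)
      \<le> (\<Sum>i\<in>?K. lam i * (\<Sum>j\<in>?K. lam j * ?cost i j))"
    using plan lam_nonneg lam_sum by (rule Psi_mixture_le)
  have lower: "(\<Sum>i\<in>?K. \<Sum>j\<in>?K. if i < j then lam i * lam j * Wpp p (?\<mu> i) (?\<mu> j) else 0)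
      \<le> Psi p N lam ?\<mu> \<nu>hat"
    unfolding Psi_def using nuhat_prob p lam_nonneg lam_sum w_pos w_sum
    by (intro sum_pairs_Wpp_le_weighted_Wpp ex_coupling_dmeas) (auto intro: less_imp_le)
  obtain i j where "i \<in> ?K" "j \<in> ?K" "?\<mu> i \<noteq> ?\<mu> j" using not_all_eq by blast
  hence pos: "0 < (\<Sum>i\<in>?K. \<Sum>j\<in>?K. if i < j then lam i * lam j * Wpp p (?\<mu> i) (?\<mu> j) else 0)"
    using p lam_pos plan pi_opt by (intro sum_pairs_Wpp_pos[where P = pi]) auto
  have "0 \<le> (\<Sum>i\<in>?K. lam i * (\<Sum>j\<in>?K. lam j * ?cost i j))"
    using plan lam_nonneg by (intro sum_nonneg mult_nonneg_nonneg) (auto simp: is_plan_def)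
  from frac_le[OF this upper pos lower] show ?thesis .
qed

end
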